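(* Let $\gamma\ge1$ and consider the SIEMS3 coefficients $(a_0,a_1,a_2)=(\gamma^2+\gamma-\tfrac16,\ \tfrac56-2\gamma^2,\ \gamma^2-\gamma+\tfrac13)$, $(b_0,\dots,b_3)=(\gamma^2,\ 2\gamma-2\gamma^2,\ \gamma^2-2\gamma+1,\ 0)$, $(c_0,c_1,c_2)=(\gamma^2+2\gamma,\ -2\gamma^2-2\gamma+1,\ \gamma^2)$. Then $$\sigma_{\mathrm{F}}=1,\quad\sigma_{\mathrm{E}}=\frac{3(4\gamma^2+4\gamma-1)}{12\gamma^2-2},\quad\lambda_{\mathrm{I}}=\frac{3(2\gamma-1)^2}{12\gamma^2-2},\quad\text{so that}\quad\mathfrak{I}_{\mathrm{IE}}=\frac{(2\gamma-1)^2}{4\gamma^2+4\gamma-1}.$$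
   Context: For coefficient vectors $(a_j)_{j=0}^{\mathrm{k}-1}$, $(b_j)_{j=0}^{\mathrm{k}}$, $(c_j)_{j=0}^{\mathrm{k}-1}$ define $a(\theta)=\sum_j a_je^{\imath j\theta}$, $b(\theta)=\sum_j b_je^{\imath j\theta}$, $c(\theta)=\sum_jc_je^{\imath j\theta}$ and $\sigma_{\mathrm{F}}=\max_{\theta\in[0,2\pi)}|1/a(\theta)|$, $\sigma_{\mathrm{E}}=\max_{\theta\in[0,2\pi)}|c(\theta)/a(\theta)|$, $\lambda_{\mathrm{I}}=\min_{\theta\in[0,2\pi)}\Re[b(\theta)/a(\theta)]$, $\mathfrak{I}_{\mathrm{IE}}=\lambda_{\mathrm{I}}/\sigma_{\mathrm{E}}$. Here $\mathrm{k}=3$. *)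

theory Defs
  imports "HOL-Analysis.Analysis"
begin

definition tpoly :: "real list \<Rightarrow> real \<Rightarrow> complex" where
  "tpoly cs \<theta> = (\<Sum>j<length cs. complex_of_real (cs ! j) * exp (\<i> * of_nat j * complex_of_real \<theta>))"

definition sigmaF :: "real list \<Rightarrow> real" where
  "sigmaF a = (SUP \<theta>\<in>{0..<2*pi}. cmod (1 / tpoly a \<theta>))"

definition sigmaE :: "real list \<Rightarrow> real list \<Rightarrow> real" where
  "sigmaE a c = (SUP \<theta>\<in>{0..<2*pi}. cmod (tpoly c \<theta> / tpoly a \<theta>))"

definition lambdaI :: "real list \<Rightarrow> real list \<Rightarrow> real" where
  "lambdaI a b = (INF \<theta>\<in>{0..<2*pi}. Re (tpoly b \<theta> / tpoly a \<theta>))"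

definition IIE :: "real list \<Rightarrow> real list \<Rightarrow> real list \<Rightarrow> real" where
  "IIE a b c = lambdaI a b / sigmaE a c"

end

theory Submission
  imports Defs
begin

(*
  Put x = cos theta. For real three-term coefficient lists q, p, both
  Re (q(theta) * cnj (p(theta))) and |p(theta)|^2 are quadratic polynomials in x,
  so each extremal problem becomes a polynomial inequality on [-1, 1].
  |a|^2 - 1 vanishes at x = 1 (theta = 0), and the cross differences comparing
  |c/a|^2 and Re (b/a) with their values at theta = pi vanish at x = -1.  After
  dividing out that root, the remaining linear factor in x is nonnegative on
  [-1, 1] because its values at x = 1 and x = -1 are polynomials in t = gamma - 1
  with positive coefficients.  So sigma_F is attained at theta = 0, sigma_E and
  lambda_I at theta = pi, where a(pi) = 4 gamma^2 - 2/3, b(pi) = (2 gamma - 1)^2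
  and c(pi) = 4 gamma^2 + 4 gamma - 1.
*)

lemma tpoly_cis: "tpoly cs \<theta> = (\<Sum>j<length cs. complex_of_real (cs ! j) * cis (real j * \<theta>))"
  by (simp add: tpoly_def cis_conv_exp mult_ac)

lemma tpoly_append_zero: "tpoly (cs @ [0]) \<theta> = tpoly cs \<theta>"
  by (simp add: tpoly_def nth_append)

lemma Re_tpoly_mult_cnj:
  "Re (tpoly q \<theta> * cnj (tpoly p \<theta>)) =
     (\<Sum>j<length q. \<Sum>k<length p. q ! j * p ! k * cos ((real j - real k) * \<theta>))"
  by (simp add: tpoly_cis sum_product cis_cnj cis_mult algebra_simps)

definition corr3 :: "real list \<Rightarrow> real list \<Rightarrow> real \<Rightarrow> real" where
  "corr3 q p x = (q!0*p!0 + q!1*p!1 + q!2*p!2) + (q!0*p!1 + q!1*p!0 + q!1*p!2 + q!2*p!1) * x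
     + (q!0*p!2 + q!2*p!0) * (2*x^2 - 1)"

lemma Re_tpoly3_mult_cnj:
  assumes "length q = 3" "length p = 3"
  shows "Re (tpoly q \<theta> * cnj (tpoly p \<theta>)) = corr3 q p (cos \<theta>)"
proof -
  have cos_double: "cos (\<theta> * 2) = 2 * (cos \<theta>)^2 - 1"
    by (metis cos_double_cos mult.commute)
  show ?thesis
    unfolding Re_tpoly_mult_cnj using assms
    by (simp add: corr3_def lessThan_Suc numeral_eq_Suc algebra_simps cos_double power2_eq_square)
qed

lemma cmod_tpoly3_squared:
  assumes "length p = 3"
  shows "(cmod (tpoly p \<theta>))\<^sup>2 = corr3 p p (cos \<theta>)"
  using Re_tpoly3_mult_cnj[OF assms assms, of \<theta>]
  by (simp flip: complex_norm_square)

lemma cmod_tpoly3_divide_squared: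
  assumes "length q = 3" "length p = 3"
  shows "(cmod (tpoly q \<theta> / tpoly p \<theta>))\<^sup>2 = corr3 q q (cos \<theta>) / corr3 p p (cos \<theta>)"
  by (simp add: norm_divide power_divide cmod_tpoly3_squared assms)

lemma Re_tpoly3_divide:
  assumes "length q = 3" "length p = 3"
  shows "Re (tpoly q \<theta> / tpoly p \<theta>) = corr3 q p (cos \<theta>) / corr3 p p (cos \<theta>)"
proof -
  have "tpoly q \<theta> / tpoly p \<theta> = tpoly q \<theta> * cnj (tpoly p \<theta>) / of_real ((cmod (tpoly p \<theta>))\<^sup>2)"
    by (metis complex_div_cnj of_real_power)
  then show ?thesis
    by (simp only: Re_divide_of_real Re_tpoly3_mult_cnj[OF assms] cmod_tpoly3_squared[OF assms(2)])
qed

lemma SUP_eq_attained: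
  fixes f :: "'a \<Rightarrow> 'b::conditionally_complete_lattice"
  assumes "\<And>x. x \<in> S \<Longrightarrow> f x \<le> M" "x\<^sub>0 \<in> S" "f x\<^sub>0 = M"
  shows "(SUP x\<in>S. f x) = M"
  using assms by (intro cSup_eq_maximum) auto

lemma INF_eq_attained:
  fixes f :: "'a \<Rightarrow> 'b::conditionally_complete_lattice"
  assumes "\<And>x. x \<in> S \<Longrightarrow> M \<le> f x" "x\<^sub>0 \<in> S" "f x\<^sub>0 = M"
  shows "(INF x\<in>S. f x) = M"
  using assms by (intro cInf_eq_minimum) auto

lemma divide_le_divide_cross:
  fixes a b c d :: "'a::linordered_field"
  assumes "0 < b" "0 < d" "d * a \<le> c * b"
  shows "a / b \<le> c / d"
  using assms by (simp add: field_simps)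

definition siems3_a :: "real \<Rightarrow> real list" where
  "siems3_a \<gamma> = [\<gamma>^2 + \<gamma> - 1/6, 5/6 - 2*\<gamma>^2, \<gamma>^2 - \<gamma> + 1/3]"

definition siems3_b :: "real \<Rightarrow> real list" where
  "siems3_b \<gamma> = [\<gamma>^2, 2*\<gamma> - 2*\<gamma>^2, \<gamma>^2 - 2*\<gamma> + 1]"

definition siems3_c :: "real \<Rightarrow> real list" where
  "siems3_c \<gamma> = [\<gamma>^2 + 2*\<gamma>, -2*\<gamma>^2 - 2*\<gamma> + 1, \<gamma>^2]"

lemma length_siems3 [simp]:
  "length (siems3_a \<gamma>) = 3" "length (siems3_b \<gamma>) = 3" "length (siems3_c \<gamma>) = 3"
  by (simp_all add: siems3_a_def siems3_b_def siems3_c_def)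

lemma siems3_corr_at_minus_one:
  "corr3 (siems3_a \<gamma>) (siems3_a \<gamma>) (-1) = (4*\<gamma>^2 - 2/3)^2"
  "corr3 (siems3_b \<gamma>) (siems3_a \<gamma>) (-1) = (2*\<gamma> - 1)^2 * (4*\<gamma>^2 - 2/3)"
  "corr3 (siems3_c \<gamma>) (siems3_c \<gamma>) (-1) = (4*\<gamma>^2 + 4*\<gamma> - 1)^2"
  by (simp_all add: corr3_def siems3_a_def siems3_b_def siems3_c_def power2_eq_square field_simps)

lemma siems3_at_pi_pos:
  fixes \<gamma> :: real
  assumes "1 \<le> \<gamma>"
  shows "0 < 4*\<gamma>^2 - 2/3" "0 < 4*\<gamma>^2 + 4*\<gamma> - 1"
  using one_le_power[OF assms, of 2] assms by linarith+

lemma siems3_corr_a_a_ge_1: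
  assumes "1 \<le> \<gamma>" "\<bar>x\<bar> \<le> 1"
  shows "1 \<le> corr3 (siems3_a \<gamma>) (siems3_a \<gamma>) x"
proof -
  define t where "t = \<gamma> - 1"
  have "0 \<le> t" and \<gamma>: "\<gamma> = 1 + t" using assms by (auto simp: t_def)
  have "corr3 (siems3_a \<gamma>) (siems3_a \<gamma>) x - 1 = (1 - x) *
      ((1 + x) * (1/6 + 4*t + 4*t^2) + (1 - x) * (91/18 + 80/3*t + 136/3*t^2 + 32*t^3 + 8*t^4)) / 2"
    unfolding \<gamma> corr3_def siems3_a_def by simp algebra
  moreover have "0 \<le> \<dots>" using \<open>0 \<le> t\<close> assms(2) by (simp add: abs_le_iff)
  ultimately show ?thesis by simp
qed

lemma siems3_corr_c_c_le:
  assumes "1 \<le> \<gamma>" "\<bar>x\<bar> \<le> 1"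
  shows "(4*\<gamma>^2 - 2/3)^2 * corr3 (siems3_c \<gamma>) (siems3_c \<gamma>) x
    \<le> (4*\<gamma>^2 + 4*\<gamma> - 1)^2 * corr3 (siems3_a \<gamma>) (siems3_a \<gamma>) x"
proof -
  define t where "t = \<gamma> - 1"
  have "0 \<le> t" and \<gamma>: "\<gamma> = 1 + t" using assms by (auto simp: t_def)
  have "(4*\<gamma>^2 + 4*\<gamma> - 1)^2 * corr3 (siems3_a \<gamma>) (siems3_a \<gamma>) x
      - (4*\<gamma>^2 - 2/3)^2 * corr3 (siems3_c \<gamma>) (siems3_c \<gamma>) x = (1 + x) *
      ((1 + x) * (341/18 + 172/3*t + 164/3*t^2 + 16*t^3)
       + (1 - x) * (829/18 + 2648/9*t + 6776/9*t^2 + 944*t^3 + 568*t^4 + 128*t^5)) / 2"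
    unfolding \<gamma> corr3_def siems3_a_def siems3_c_def by simp algebra
  moreover have "0 \<le> \<dots>" using \<open>0 \<le> t\<close> assms(2) by (simp add: abs_le_iff)
  ultimately show ?thesis by simp
qed

lemma siems3_corr_b_a_ge:
  assumes "1 \<le> \<gamma>" "\<bar>x\<bar> \<le> 1"
  shows "(2*\<gamma> - 1)^2 * corr3 (siems3_a \<gamma>) (siems3_a \<gamma>) x
    \<le> (4*\<gamma>^2 - 2/3) * corr3 (siems3_b \<gamma>) (siems3_a \<gamma>) x"
proof -
  define t where "t = \<gamma> - 1"
  have "0 \<le> t" and \<gamma>: "\<gamma> = 1 + t" using assms by (auto simp: t_def)
  have "(4*\<gamma>^2 - 2/3) * corr3 (siems3_b \<gamma>) (siems3_a \<gamma>) x
      - (2*\<gamma> - 1)^2 * corr3 (siems3_a \<gamma>) (siems3_a \<gamma>) x = (1 + x) *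
      ((1 + x) * (7/6 + 2*t) + (1 - x) * (29/18 + 34/3*t + 24*t^2 + 16*t^3)) / 2"
    unfolding \<gamma> corr3_def siems3_a_def siems3_b_def by simp algebra
  moreover have "0 \<le> \<dots>" using \<open>0 \<le> t\<close> assms(2) by (simp add: abs_le_iff)
  ultimately show ?thesis by simp
qed

lemma sigmaF_siems3:
  assumes "1 \<le> \<gamma>"
  shows "sigmaF (siems3_a \<gamma>) = 1"
  unfolding sigmaF_def
proof (rule SUP_eq_attained)
  fix \<theta>
  have "1 \<le> (cmod (tpoly (siems3_a \<gamma>) \<theta>))\<^sup>2"
    using siems3_corr_a_a_ge_1[OF assms abs_cos_le_one] by (simp add: cmod_tpoly3_squared)
  then have "1 \<le> cmod (tpoly (siems3_a \<gamma>) \<theta>)"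
    by (metis norm_ge_zero one_power2 power2_le_imp_le)
  then show "cmod (1 / tpoly (siems3_a \<gamma>) \<theta>) \<le> 1"
    by (simp add: norm_divide divide_le_eq)
next
  have "corr3 (siems3_a \<gamma>) (siems3_a \<gamma>) 1 = 1"
    by (simp add: corr3_def siems3_a_def; algebra)
  then have "(cmod (tpoly (siems3_a \<gamma>) 0))\<^sup>2 = 1"
    by (simp add: cmod_tpoly3_squared)
  then have "cmod (tpoly (siems3_a \<gamma>) 0) = 1"
    using norm_ge_zero[of "tpoly (siems3_a \<gamma>) 0"] by (auto simp: power2_eq_1_iff)
  then show "cmod (1 / tpoly (siems3_a \<gamma>) 0) = 1"
    by (simp add: norm_divide)
qed auto

lemma sigmaE_siems3:
  assumes "1 \<le> \<gamma>"
  shows "sigmaE (siems3_a \<gamma>) (siems3_c \<gamma>) = (4*\<gamma>^2 + 4*\<gamma> - 1) / (4*\<gamma>^2 - 2/3)"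
  unfolding sigmaE_def
proof (rule SUP_eq_attained)
  fix \<theta>
  let ?A = "corr3 (siems3_a \<gamma>) (siems3_a \<gamma>) (cos \<theta>)"
  let ?C = "corr3 (siems3_c \<gamma>) (siems3_c \<gamma>) (cos \<theta>)"
  have "0 < ?A" using siems3_corr_a_a_ge_1[OF assms abs_cos_le_one[of \<theta>]] by linarith
  then have "?C / ?A \<le> (4*\<gamma>^2 + 4*\<gamma> - 1)^2 / (4*\<gamma>^2 - 2/3)^2"
    by (rule divide_le_divide_cross)
       (use siems3_at_pi_pos[OF assms] siems3_corr_c_c_le[OF assms abs_cos_le_one[of \<theta>]] in simp_all)
  then have "(cmod (tpoly (siems3_c \<gamma>) \<theta> / tpoly (siems3_a \<gamma>) \<theta>))\<^sup>2
      \<le> ((4*\<gamma>^2 + 4*\<gamma> - 1) / (4*\<gamma>^2 - 2/3))\<^sup>2"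
    unfolding cmod_tpoly3_divide_squared[OF length_siems3(3,1)] power_divide .
  then show "cmod (tpoly (siems3_c \<gamma>) \<theta> / tpoly (siems3_a \<gamma>) \<theta>)
      \<le> (4*\<gamma>^2 + 4*\<gamma> - 1) / (4*\<gamma>^2 - 2/3)"
    by (rule power2_le_imp_le) (use siems3_at_pi_pos[OF assms] in simp)
next
  show "cmod (tpoly (siems3_c \<gamma>) pi / tpoly (siems3_a \<gamma>) pi)
      = (4*\<gamma>^2 + 4*\<gamma> - 1) / (4*\<gamma>^2 - 2/3)"
  proof (rule power2_eq_imp_eq)
    show "(cmod (tpoly (siems3_c \<gamma>) pi / tpoly (siems3_a \<gamma>) pi))\<^sup>2
        = ((4*\<gamma>^2 + 4*\<gamma> - 1) / (4*\<gamma>^2 - 2/3))\<^sup>2"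
      unfolding cmod_tpoly3_divide_squared[OF length_siems3(3,1)] power_divide
      by (simp add: siems3_corr_at_minus_one)
  qed (use siems3_at_pi_pos[OF assms] in simp_all)
qed simp

lemma lambdaI_siems3:
  assumes "1 \<le> \<gamma>"
  shows "lambdaI (siems3_a \<gamma>) (siems3_b \<gamma>) = (2*\<gamma> - 1)^2 / (4*\<gamma>^2 - 2/3)"
  unfolding lambdaI_def
proof (rule INF_eq_attained)
  fix \<theta>
  let ?A = "corr3 (siems3_a \<gamma>) (siems3_a \<gamma>) (cos \<theta>)"
  let ?B = "corr3 (siems3_b \<gamma>) (siems3_a \<gamma>) (cos \<theta>)"
  have "0 < ?A" using siems3_corr_a_a_ge_1[OF assms abs_cos_le_one[of \<theta>]] by linarith
  have "(2*\<gamma> - 1)^2 / (4*\<gamma>^2 - 2/3) \<le> ?B / ?A"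
    by (rule divide_le_divide_cross[OF siems3_at_pi_pos(1)[OF assms] \<open>0 < ?A\<close>])
       (use siems3_corr_b_a_ge[OF assms abs_cos_le_one[of \<theta>]] in \<open>simp add: mult.commute\<close>)
  then show "(2*\<gamma> - 1)^2 / (4*\<gamma>^2 - 2/3) \<le> Re (tpoly (siems3_b \<gamma>) \<theta> / tpoly (siems3_a \<gamma>) \<theta>)"
    by (simp add: Re_tpoly3_divide)
next
  show "Re (tpoly (siems3_b \<gamma>) pi / tpoly (siems3_a \<gamma>) pi) = (2*\<gamma> - 1)^2 / (4*\<gamma>^2 - 2/3)"
    using siems3_at_pi_pos(1)[OF assms]
    by (simp add: Re_tpoly3_divide siems3_corr_at_minus_one power2_eq_square)
qed simp

theorem mainTheorem10:
  fixes \<gamma> :: real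
  assumes "\<gamma> \<ge> 1"
  defines "a \<equiv> [\<gamma>^2 + \<gamma> - 1/6, 5/6 - 2*\<gamma>^2, \<gamma>^2 - \<gamma> + 1/3]"
      and "b \<equiv> [\<gamma>^2, 2*\<gamma> - 2*\<gamma>^2, \<gamma>^2 - 2*\<gamma> + 1, 0]"
      and "c \<equiv> [\<gamma>^2 + 2*\<gamma>, -2*\<gamma>^2 - 2*\<gamma> + 1, \<gamma>^2]"
  shows "sigmaF a = 1
    \<and> sigmaE a c = 3 * (4*\<gamma>^2 + 4*\<gamma> - 1) / (12*\<gamma>^2 - 2)
    \<and> lambdaI a b = 3 * (2*\<gamma> - 1)^2 / (12*\<gamma>^2 - 2)
    \<and> IIE a b c = (2*\<gamma> - 1)^2 / (4*\<gamma>^2 + 4*\<gamma> - 1)"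
proof -
  have a: "a = siems3_a \<gamma>" and c: "c = siems3_c \<gamma>" and b: "b = siems3_b \<gamma> @ [0]"
    by (simp_all add: a_def b_def c_def siems3_a_def siems3_b_def siems3_c_def)
  have sF: "sigmaF a = 1"
    unfolding a by (rule sigmaF_siems3[OF assms(1)])
  have sE: "sigmaE a c = (4*\<gamma>^2 + 4*\<gamma> - 1) / (4*\<gamma>^2 - 2/3)"
    unfolding a c by (rule sigmaE_siems3[OF assms(1)])
  have lI: "lambdaI a b = (2*\<gamma> - 1)^2 / (4*\<gamma>^2 - 2/3)"
    unfolding a b lambdaI_def tpoly_append_zero
    by (rule lambdaI_siems3[OF assms(1), unfolded lambdaI_def])
  have D_pos: "0 < 4*\<gamma>^2 - 2/3" by (rule siems3_at_pi_pos(1)[OF assms(1)])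
  have rescale: "z / (4*\<gamma>^2 - 2/3) = 3 * z / (12*\<gamma>^2 - 2)" for z
    using D_pos by (simp add: field_simps)
  have cancel: "(x / (4*\<gamma>^2 - 2/3)) / (y / (4*\<gamma>^2 - 2/3)) = x / y" for x y
    using D_pos by (simp add: divide_divide_eq_left)
  show ?thesis
    unfolding IIE_def sF sE lI cancel by (simp only: rescale)
qed

end
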